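(* Let $\mathcal A$ be finite, $r,\hat r:\mathcal A\to[0,1]$, $\eta>0$, $\pi^{\mathrm{ref}}\in\Delta(\mathcal A)$ with $\pi^{\mathrm{ref}}(a)>0$ for all $a$, and $g=r-\hat r$. For $u\in[0,1]$ let $r_u=(1-u)r+u\hat r$ and let $\pi_u$ be the unique maximizer over $\Delta(\mathcal A)$ of $\pi\mapsto\sum_ar_u(a)\pi(a)-\eta^{-1}\mathrm{KL}(\pi^{\mathrm{ref}}\|\pi)$. Define $w_u(a)=\pi_u(a)/\pi^{\mathrm{ref}}(a)$, $Z_u=\sum_a\pi_u(a)^2/\pi^{\mathrm{ref}}(a)$, the probability distribution $\mu_u(a)=\frac{\pi_u(a)^2}{\pi^{\mathrm{ref}}(a)}/Z_u$, and $$F(u)=\frac\eta2\left(\sum_a\frac{\pi_u(a)^2}{\pi^{\mathrm{ref}}(a)}g(a)^2-\frac{\Big(\sum_a\frac{\pi_u(a)^2}{\pi^{\mathrm{ref}}(a)}g(a)\Big)^2}{\sum_a\frac{\pi_u(a)^2}{\pi^{\mathrm{ref}}(a)}}\right).$$ Then for every $u\in(0,1)$, $$F'(u)=-\eta^2Z_u\,\mathbb E_{a\sim\mu_u}\Big[w_u(a)\big(g(a)-\mathbb E_{a'\sim\mu_u}g(a')\big)^3\Big].$$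
   Context: $\mathrm{KL}(P\|Q)=\sum_aP(a)\log(P(a)/Q(a))$. *)

theory Defs
  imports "HOL-Analysis.Analysis"
begin

definition Delta :: "('a::finite \<Rightarrow> real) set" where
  "Delta = {p. (\<forall>a. 0 \<le> p a) \<and> (\<Sum>a\<in>UNIV. p a) = 1}"

definition KL :: "('a::finite \<Rightarrow> real) \<Rightarrow> ('a \<Rightarrow> real) \<Rightarrow> real" where
  "KL P Q = (\<Sum>a\<in>UNIV. P a * ln (P a / Q a))"

text \<open>Regularised objective, with value minus infinity when KL(pref||p) = +infinity,
  i.e. when p vanishes somewhere (pref is assumed strictly positive).\<close>
definition reg_obj :: "real \<Rightarrow> ('a::finite \<Rightarrow> real) \<Rightarrow> ('a \<Rightarrow> real) \<Rightarrow> ('a \<Rightarrow> real) \<Rightarrow> ereal" where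
  "reg_obj eta pref R p =
     (if (\<forall>a. 0 < p a)
      then ereal ((\<Sum>a\<in>UNIV. R a * p a) - KL pref p / eta)
      else -\<infinity>)"

definition opt_pol :: "real \<Rightarrow> ('a::finite \<Rightarrow> real) \<Rightarrow> ('a \<Rightarrow> real) \<Rightarrow> ('a \<Rightarrow> real)" where
  "opt_pol eta pref R =
     (THE p. p \<in> Delta \<and> (\<forall>q\<in>Delta. reg_obj eta pref R q \<le> reg_obj eta pref R p))"

definition interp_reward :: "('a \<Rightarrow> real) \<Rightarrow> ('a \<Rightarrow> real) \<Rightarrow> real \<Rightarrow> ('a \<Rightarrow> real)" where
  "interp_reward r rh u = (\<lambda>a. (1 - u) * r a + u * rh a)"

definition pol_u :: "real \<Rightarrow> ('a::finite \<Rightarrow> real) \<Rightarrow> ('a \<Rightarrow> real) \<Rightarrow> ('a \<Rightarrow> real) \<Rightarrow> real \<Rightarrow> ('a \<Rightarrow> real)" where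
  "pol_u eta pref r rh u = opt_pol eta pref (interp_reward r rh u)"

end

theory Submission
  imports Defs
begin

(*
  Maximising <R, p> - KL(pref || p) / eta over the simplex gives
  p(a) = pref(a) / (eta * (lam - R(a))) with a multiplier lam > max R fixed by normalisation;
  uniqueness comes from ln x < x - 1 for x ~= 1.  Along r_u = r + u * (rh - r), implicit
  differentiation of the normalisation shows that lam'(u) is the mu_u-mean of rh - r = -g,
  hence pi_u' = -eta * pi_u * w_u * (g - E) with E the mu_u-mean of g.  The bracket in F is
  the weighted variance S2 - S1^2 / S0 of g with weights q = pi_u^2 / pref, whose derivative
  is the sum of q' * (g - E)^2; inserting q' = -2 * eta * q * w_u * (g - E) gives the
  third moment.
*)

lemma KL_diff_gt:
  fixes P p q :: "'a::finite \<Rightarrow> real"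
  assumes P_pos: "\<And>a. 0 < P a" and p_pos: "\<And>a. 0 < p a" and q_pos: "\<And>a. 0 < q a"
    and "q \<noteq> p"
  shows "(\<Sum>a\<in>UNIV. P a * (1 - q a / p a)) < KL P q - KL P p"
proof -
  have term_le: "P a * (1 - q a / p a) \<le> P a * (ln (p a) - ln (q a))" for a
    using ln_diff_le[OF q_pos[of a] p_pos[of a]] p_pos[of a] P_pos[of a]
    by (intro mult_left_mono) (simp_all add: diff_divide_distrib)
  obtain a0 where "q a0 \<noteq> p a0"
    using \<open>q \<noteq> p\<close> by blast
  then have term_less: "P a0 * (1 - q a0 / p a0) < P a0 * (ln (p a0) - ln (q a0))"
    using ln_diff_less[OF q_pos[of a0] p_pos[of a0]] p_pos[of a0] P_pos[of a0]
    by (intro mult_strict_left_mono) (simp_all add: diff_divide_distrib)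
  have "(\<Sum>a\<in>UNIV. P a * (1 - q a / p a)) < (\<Sum>a\<in>UNIV. P a * (ln (p a) - ln (q a)))"
    using term_le term_less by (intro sum_strict_mono_ex1) auto
  also have "\<dots> = KL P q - KL P p"
  proof -
    have "P a * ln (P a / q a) - P a * ln (P a / p a) = P a * (ln (p a) - ln (q a))" for a
      using P_pos[of a] p_pos[of a] q_pos[of a] by (simp add: ln_div algebra_simps)
    then show ?thesis
      by (simp add: KL_def sum_subtractf[symmetric])
  qed
  finally show ?thesis .
qed

lemma opt_pol_eqI:
  assumes "p \<in> Delta"
    and "\<And>q. q \<in> Delta \<Longrightarrow> q \<noteq> p \<Longrightarrow> reg_obj eta pref R q < reg_obj eta pref R p"
  shows "opt_pol eta pref R = p"
  unfolding opt_pol_def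
proof (rule the_equality)
  show "p \<in> Delta \<and> (\<forall>q\<in>Delta. reg_obj eta pref R q \<le> reg_obj eta pref R p)"
    using assms by (metis order.order_iff_strict)
next
  fix q assume "q \<in> Delta \<and> (\<forall>q'\<in>Delta. reg_obj eta pref R q' \<le> reg_obj eta pref R q)"
  then show "q = p"
    using assms by (meson not_le)
qed

lemma opt_pol_inverse_gap:
  fixes pref R :: "'a::finite \<Rightarrow> real"
  assumes eta_pos: "0 < eta" and pref_pos: "\<And>a. 0 < pref a"
    and below: "\<And>a. R a < l" and normalised: "(\<Sum>a\<in>UNIV. pref a / eta / (l - R a)) = 1"
  shows "opt_pol eta pref R = (\<lambda>a. pref a / eta / (l - R a))"
proof -
  define p where "p = (\<lambda>a. pref a / eta / (l - R a))"
  have p_pos: "0 < p a" for a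
    using eta_pos pref_pos[of a] below[of a] by (simp add: p_def)
  have p_Delta: "p \<in> Delta"
    using p_pos normalised by (simp add: Delta_def p_def less_imp_le)
  have linear_part: "(\<Sum>a\<in>UNIV. pref a * (1 - q a / p a))
      = (\<Sum>a\<in>UNIV. pref a) - eta * l + eta * (\<Sum>a\<in>UNIV. R a * q a)" if "q \<in> Delta" for q
  proof -
    have "pref a * (1 - q a / p a) = pref a - eta * l * q a + eta * (R a * q a)" for a
      using eta_pos pref_pos[of a] below[of a] by (simp add: p_def field_simps)
    then show ?thesis
      using that by (simp add: Delta_def sum.distrib sum_subtractf sum_distrib_left[symmetric])
  qed
  have "opt_pol eta pref R = p"
  proof (rule opt_pol_eqI[OF p_Delta])
    fix q assume q_Delta: "q \<in> Delta" and "q \<noteq> p"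
    show "reg_obj eta pref R q < reg_obj eta pref R p"
    proof (cases "\<forall>a. 0 < q a")
      case True
      have "(\<Sum>a\<in>UNIV. pref a * (1 - q a / p a)) < KL pref q - KL pref p"
        using True \<open>q \<noteq> p\<close> by (intro KL_diff_gt pref_pos p_pos) auto
      moreover have "(\<Sum>a\<in>UNIV. pref a * (1 - p a / p a)) = 0"
        using p_pos by (simp add: less_imp_neq[symmetric])
      ultimately have "eta * ((\<Sum>a\<in>UNIV. R a * q a) - (\<Sum>a\<in>UNIV. R a * p a)) < KL pref q - KL pref p"
        using linear_part[OF q_Delta] linear_part[OF p_Delta] by (simp add: right_diff_distrib)
      then have "(\<Sum>a\<in>UNIV. R a * q a) - (\<Sum>a\<in>UNIV. R a * p a) < (KL pref q - KL pref p) / eta"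
        using eta_pos by (simp add: pos_less_divide_eq mult.commute)
      then show ?thesis
        using True p_pos by (simp add: reg_obj_def diff_divide_distrib)
    qed (use p_pos in \<open>auto simp: reg_obj_def\<close>)
  qed
  then show ?thesis
    by (simp only: p_def)
qed

lemma normaliser_exists:
  fixes c R :: "'a::finite \<Rightarrow> real"
  assumes c_pos: "\<And>a. 0 < c a"
  shows "\<exists>l. (\<forall>a. R a < l) \<and> (\<Sum>a\<in>UNIV. c a / (l - R a)) = 1"
proof -
  define h where "h l = (\<Sum>a\<in>UNIV. c a / (l - R a))" for l
  have "Max (range R) \<in> range R"
    by (rule Max_in) simp_all
  then obtain a0 where "R a0 = Max (range R)"
    by (metis rangeE)
  then have R_le: "R a \<le> R a0" for a
    by simp
  define lo where "lo = R a0 + c a0"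
  define hi where "hi = R a0 + (\<Sum>a\<in>UNIV. c a)"
  have c_le_total: "c a \<le> (\<Sum>a\<in>UNIV. c a)" for a
    using c_pos by (intro member_le_sum) (auto intro: less_imp_le)
  have below_lo: "R a < l" if "lo \<le> l" for a l
    using R_le[of a] c_pos[of a0] that by (simp add: lo_def)
  have "1 = c a0 / (lo - R a0)"
    using c_pos[of a0] by (simp add: lo_def)
  also have "\<dots> \<le> h lo"
    unfolding h_def using c_pos below_lo
    by (intro member_le_sum) (auto intro: less_imp_le)
  finally have h_lo: "1 \<le> h lo" .
  have "h hi \<le> (\<Sum>a\<in>UNIV. c a / (\<Sum>a\<in>UNIV. c a))"
    unfolding h_def
  proof (rule sum_mono)
    fix a
    have "(\<Sum>a\<in>UNIV. c a) \<le> hi - R a"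
      using R_le[of a] by (simp add: hi_def)
    then show "c a / (hi - R a) \<le> c a / (\<Sum>a\<in>UNIV. c a)"
      using c_pos[of a] c_le_total[of a] by (intro divide_left_mono) auto
  qed
  also have "\<dots> = 1"
    using c_pos[of a0] c_le_total[of a0] by (simp add: sum_divide_distrib[symmetric])
  finally have h_hi: "h hi \<le> 1" .
  have "continuous_on {lo..hi} h"
    unfolding h_def using below_lo by (intro continuous_intros) force
  moreover have "lo \<le> hi"
    using c_le_total[of a0] by (simp add: lo_def hi_def)
  ultimately obtain l where "lo \<le> l" "h l = 1"
    using IVT2'[of h hi 1 lo] h_lo h_hi by blast
  then show ?thesis
    using below_lo unfolding h_def by blast
qed

(* lam v is the multiplier of the optimal policy c a / gap v a for the reward b + v * d. *)
locale affine_normaliser =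
  fixes c b d :: "'a::finite \<Rightarrow> real" and lam :: "real \<Rightarrow> real"
  assumes c_pos: "0 < c a"
    and below_normaliser: "b a + v * d a < lam v"
    and normalised: "(\<Sum>a\<in>UNIV. c a / (lam v - (b a + v * d a))) = 1"
begin

definition gap :: "real \<Rightarrow> 'a \<Rightarrow> real" where
  "gap v a = lam v - (b a + v * d a)"

lemma gap_pos: "0 < gap v a"
  using below_normaliser by (simp add: gap_def)

lemma gap_neq_zero [simp]: "gap v a \<noteq> 0"
  using gap_pos[of v a] by simp

lemma normaliser_increment:
  "(lam v - lam u) * (\<Sum>a\<in>UNIV. c a / (gap u a * gap v a))
     = (v - u) * (\<Sum>a\<in>UNIV. c a * d a / (gap u a * gap v a))"
proof -
  have "c a / gap v a - c a / gap u a
      = (v - u) * (c a * d a / (gap u a * gap v a)) - (lam v - lam u) * (c a / (gap u a * gap v a))" for a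
  proof -
    have "c a / gap v a - c a / gap u a = c a * (gap u a - gap v a) / (gap u a * gap v a)"
      using gap_pos[of u a] gap_pos[of v a] by (simp add: field_simps)
    also have "gap u a - gap v a = (v - u) * d a - (lam v - lam u)"
      by (simp add: gap_def algebra_simps)
    finally show ?thesis
      by (simp add: algebra_simps add_divide_distrib diff_divide_distrib)
  qed
  moreover have "(\<Sum>a\<in>UNIV. c a / gap v a - c a / gap u a) = 0"
    using normalised[of v] normalised[of u] by (simp add: sum_subtractf gap_def)
  ultimately show ?thesis
    by (simp add: sum_subtractf sum_distrib_left)
qed

lemma normaliser_lipschitz: "\<bar>lam v - lam u\<bar> \<le> (\<Sum>a\<in>UNIV. \<bar>d a\<bar>) * \<bar>v - u\<bar>"
proof -
  define G where "G = (\<Sum>a\<in>UNIV. \<bar>d a\<bar>)"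
  define w where "w a = c a / (gap u a * gap v a)" for a
  have w_pos: "0 < w a" for a
    using c_pos gap_pos by (simp add: w_def)
  have "\<bar>lam v - lam u\<bar> * (\<Sum>a\<in>UNIV. w a) = \<bar>v - u\<bar> * \<bar>\<Sum>a\<in>UNIV. w a * d a\<bar>"
  proof -
    have "\<bar>\<Sum>a\<in>UNIV. w a\<bar> = (\<Sum>a\<in>UNIV. w a)"
      using w_pos by (simp add: sum_nonneg less_imp_le)
    then show ?thesis
      using arg_cong[OF normaliser_increment[of v u], of abs]
      by (simp add: w_def abs_mult)
  qed
  also have "\<dots> \<le> \<bar>v - u\<bar> * (G * (\<Sum>a\<in>UNIV. w a))"
  proof (rule mult_left_mono)
    have "\<bar>\<Sum>a\<in>UNIV. w a * d a\<bar> \<le> (\<Sum>a\<in>UNIV. \<bar>w a * d a\<bar>)"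
      by (rule sum_abs)
    also have "\<dots> \<le> (\<Sum>a\<in>UNIV. w a * G)"
    proof (rule sum_mono)
      fix a
      have "\<bar>d a\<bar> \<le> G"
        unfolding G_def by (rule member_le_sum) simp_all
      then show "\<bar>w a * d a\<bar> \<le> w a * G"
        using w_pos[of a] by (simp add: abs_mult)
    qed
    finally show "\<bar>\<Sum>a\<in>UNIV. w a * d a\<bar> \<le> G * (\<Sum>a\<in>UNIV. w a)"
      by (simp add: sum_distrib_left mult.commute)
  qed simp
  finally show ?thesis
    using w_pos sum_pos[of UNIV w] by (simp add: G_def mult.assoc mult.left_commute[of "\<bar>v - u\<bar>"])
qed

lemma normaliser_has_derivative:
  "(lam has_real_derivative
      (\<Sum>a\<in>UNIV. c a * d a / (gap u a)\<^sup>2) / (\<Sum>a\<in>UNIV. c a / (gap u a)\<^sup>2)) (at u)"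
proof -
  (* The Lipschitz bound gives the continuity of lam needed to pass to the limit in
     the difference quotients supplied by normaliser_increment. *)
  define A where "A v = (\<Sum>a\<in>UNIV. c a * d a / (gap u a * gap v a))" for v
  define B where "B v = (\<Sum>a\<in>UNIV. c a / (gap u a * gap v a))" for v
  have B_pos: "0 < B v" for v
    unfolding B_def using c_pos gap_pos by (intro sum_pos) simp_all
  have "((\<lambda>v. lam v - lam u) \<longlongrightarrow> 0) (at u)"
  proof (rule Lim_null_comparison)
    show "\<forall>\<^sub>F v in at u. norm (lam v - lam u) \<le> (\<Sum>a\<in>UNIV. \<bar>d a\<bar>) * \<bar>v - u\<bar>"
      using normaliser_lipschitz by simp
    show "((\<lambda>v. (\<Sum>a\<in>UNIV. \<bar>d a\<bar>) * \<bar>v - u\<bar>) \<longlongrightarrow> 0) (at u)"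
      by (auto intro!: tendsto_eq_intros)
  qed
  then have "(lam \<longlongrightarrow> lam u) (at u)"
    by (simp add: LIM_zero_iff)
  then have gap_tendsto: "((\<lambda>v. gap v a) \<longlongrightarrow> gap u a) (at u)" for a
    unfolding gap_def by (intro tendsto_intros)
  have "((\<lambda>v. A v / B v) \<longlongrightarrow> A u / B u) (at u)"
    unfolding A_def B_def using gap_pos B_pos[of u, unfolded B_def]
    by (intro tendsto_intros gap_tendsto) (simp_all add: less_imp_neq[symmetric])
  moreover have "A v / B v = (lam v - lam u) / (v - u)" if "v \<noteq> u" for v
  proof -
    have "(lam v - lam u) * B v = (v - u) * A v"
      unfolding A_def B_def by (rule normaliser_increment)
    then show ?thesis
      using B_pos[of v] that by (simp add: field_simps)
  qed
  then have "\<forall>\<^sub>F v in at u. A v / B v = (lam v - lam u) / (v - u)"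
    by (auto simp: eventually_at_filter)
  ultimately have "((\<lambda>v. (lam v - lam u) / (v - u)) \<longlongrightarrow> A u / B u) (at u)"
    using tendsto_cong by fastforce
  then show ?thesis
    by (simp add: has_field_derivative_iff A_def B_def power2_eq_square)
qed

lemma inverse_gap_has_derivative:
  assumes "(lam has_real_derivative L) (at u)"
  shows "((\<lambda>v. c a / gap v a) has_real_derivative c a * (d a - L) / (gap u a)\<^sup>2) (at u)"
  using gap_pos[of u a] unfolding gap_def
  by (auto intro!: derivative_eq_intros assms simp: field_simps power2_eq_square)

end

lemma DERIV_weighted_variance:
  fixes q :: "real \<Rightarrow> 'a \<Rightarrow> real" and g :: "'a \<Rightarrow> real"
  assumes "finite A"
    and "\<And>a. a \<in> A \<Longrightarrow> ((\<lambda>v. q v a) has_real_derivative q' a) (at x)"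
    and "(\<Sum>a\<in>A. q x a) \<noteq> 0"
  shows "((\<lambda>v. (\<Sum>a\<in>A. q v a * (g a)\<^sup>2) - (\<Sum>a\<in>A. q v a * g a)\<^sup>2 / (\<Sum>a\<in>A. q v a))
           has_real_derivative
           (\<Sum>a\<in>A. q' a * (g a - (\<Sum>a\<in>A. q x a * g a) / (\<Sum>a\<in>A. q x a))\<^sup>2)) (at x)"
proof -
  define S0 S1 where "S0 = (\<Sum>a\<in>A. q x a)" and "S1 = (\<Sum>a\<in>A. q x a * g a)"
  define T0 T1 T2 where "T0 = (\<Sum>a\<in>A. q' a)" and "T1 = (\<Sum>a\<in>A. q' a * g a)"
    and "T2 = (\<Sum>a\<in>A. q' a * (g a)\<^sup>2)"
  have "((\<lambda>v. (\<Sum>a\<in>A. q v a * (g a)\<^sup>2) - (\<Sum>a\<in>A. q v a * g a)\<^sup>2 / (\<Sum>a\<in>A. q v a))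
           has_real_derivative T2 - (2 * S1 * T1 * S0 - S1\<^sup>2 * T0) / S0\<^sup>2) (at x)"
    unfolding S0_def S1_def T0_def T1_def T2_def using assms
    by (auto intro!: derivative_eq_intros DERIV_sum simp: power2_eq_square)
  also have "T2 - (2 * S1 * T1 * S0 - S1\<^sup>2 * T0) / S0\<^sup>2 = T2 - 2 * (S1 / S0) * T1 + (S1 / S0)\<^sup>2 * T0"
    using assms(3) by (simp add: S0_def field_simps power2_eq_square)
  also have "\<dots> = (\<Sum>a\<in>A. q' a * (g a - S1 / S0)\<^sup>2)"
    by (simp add: T0_def T1_def T2_def power2_eq_square algebra_simps sum.distrib sum_subtractf
        sum_distrib_left sum_divide_distrib)
  finally show ?thesis
    by (simp add: S0_def S1_def)
qed

locale kl_reward_path =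
  fixes eta :: real and pref r rh :: "'a::finite \<Rightarrow> real"
  assumes eta_pos: "0 < eta" and pref_pos: "0 < pref a"
begin

definition normaliser :: "real \<Rightarrow> real" where
  "normaliser v = (SOME l. (\<forall>a. r a + v * (rh a - r a) < l)
      \<and> (\<Sum>a\<in>UNIV. pref a / eta / (l - (r a + v * (rh a - r a)))) = 1)"

sublocale affine_normaliser "\<lambda>a. pref a / eta" r "\<lambda>a. rh a - r a" normaliser
proof -
  have "(\<forall>a. r a + v * (rh a - r a) < normaliser v)
      \<and> (\<Sum>a\<in>UNIV. pref a / eta / (normaliser v - (r a + v * (rh a - r a)))) = 1" for v
    unfolding normaliser_def
    by (rule someI_ex) (intro normaliser_exists divide_pos_pos pref_pos eta_pos)
  then show "affine_normaliser (\<lambda>a. pref a / eta) r (\<lambda>a. rh a - r a) normaliser"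
    using eta_pos pref_pos by unfold_locales simp_all
qed

lemma pol_u_eq_inverse_gap: "pol_u eta pref r rh v = (\<lambda>a. pref a / eta / gap v a)"
proof -
  have "interp_reward r rh v a = r a + v * (rh a - r a)" for a
    by (simp add: interp_reward_def algebra_simps)
  then show ?thesis
    using opt_pol_inverse_gap[OF eta_pos, of pref "interp_reward r rh v" "normaliser v"]
      below_normaliser normalised pref_pos
    by (simp add: pol_u_def gap_def)
qed

definition sq_weight :: "real \<Rightarrow> 'a \<Rightarrow> real" where
  "sq_weight v a = (pol_u eta pref r rh v a)\<^sup>2 / pref a"

definition sq_weight_mean :: "real \<Rightarrow> ('a \<Rightarrow> real) \<Rightarrow> real" where
  "sq_weight_mean v f = (\<Sum>a\<in>UNIV. sq_weight v a * f a) / (\<Sum>a\<in>UNIV. sq_weight v a)"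

lemma sq_weight_eq: "sq_weight v a = pref a / (eta * gap v a)\<^sup>2"
  using eta_pos pref_pos[of a]
  by (simp add: sq_weight_def pol_u_eq_inverse_gap field_simps power2_eq_square)

lemma sq_weight_pos: "0 < sq_weight v a"
  using eta_pos pref_pos[of a] by (simp add: sq_weight_eq)

lemma normaliser_has_derivative_mean:
  "(normaliser has_real_derivative - sq_weight_mean u (\<lambda>a. r a - rh a)) (at u)"
proof -
  have "(\<Sum>a\<in>UNIV. pref a / eta * (rh a - r a) / (gap u a)\<^sup>2)
      = - eta * (\<Sum>a\<in>UNIV. sq_weight u a * (r a - rh a))"
    unfolding sum_distrib_left
    by (rule sum.cong) (use eta_pos in \<open>simp_all add: sq_weight_eq field_simps power2_eq_square\<close>)
  moreover have "(\<Sum>a\<in>UNIV. pref a / eta / (gap u a)\<^sup>2) = eta * (\<Sum>a\<in>UNIV. sq_weight u a)"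
    unfolding sum_distrib_left
    by (rule sum.cong) (use eta_pos in \<open>simp_all add: sq_weight_eq field_simps power2_eq_square\<close>)
  ultimately show ?thesis
    using normaliser_has_derivative[of u] eta_pos by (simp add: sq_weight_mean_def)
qed

lemma sq_weight_has_derivative:
  fixes u :: real
  defines "E \<equiv> sq_weight_mean u (\<lambda>a. r a - rh a)"
  shows "((\<lambda>v. sq_weight v a) has_real_derivative
           - 2 * eta * sq_weight u a * (pol_u eta pref r rh u a / pref a) * (r a - rh a - E)) (at u)"
proof -
  define c where "c = pref a / eta"
  have pol_deriv: "((\<lambda>v. c / gap v a) has_real_derivative - c * (r a - rh a - E) / (gap u a)\<^sup>2) (at u)"
    using inverse_gap_has_derivative[OF normaliser_has_derivative_mean, of a]
    by (simp add: E_def c_def algebra_simps)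
  have "((\<lambda>v. (c / gap v a)\<^sup>2 / pref a) has_real_derivative
      2 * (c / gap u a) * (- c * (r a - rh a - E) / (gap u a)\<^sup>2) / pref a) (at u)"
    by (rule DERIV_cong[OF DERIV_cdivide[OF DERIV_power[OF pol_deriv]]]) (simp add: ac_simps)
  also have "2 * (c / gap u a) * (- c * (r a - rh a - E) / (gap u a)\<^sup>2) / pref a
      = - 2 * eta * sq_weight u a * (pol_u eta pref r rh u a / pref a) * (r a - rh a - E)"
    using eta_pos pref_pos[of a]
    by (simp add: sq_weight_eq pol_u_eq_inverse_gap c_def field_simps power2_eq_square)
  finally show ?thesis
    by (simp add: sq_weight_def pol_u_eq_inverse_gap c_def)
qed

end

theorem lemma5p3:
  fixes r rh pref :: "'a::finite \<Rightarrow> real" and eta u :: real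
  assumes r_range: "\<forall>a. 0 \<le> r a \<and> r a \<le> 1"
    and rh_range: "\<forall>a. 0 \<le> rh a \<and> rh a \<le> 1"
    and eta_pos: "eta > 0"
    and pref_dist: "pref \<in> Delta"
    and pref_pos: "\<forall>a. pref a > 0"
    and u_range: "0 < u" "u < 1"
  shows
    "let g = (\<lambda>a. r a - rh a);
         \<pi> = pol_u eta pref r rh;
         F = (\<lambda>v. eta / 2 *
                ((\<Sum>a\<in>UNIV. (\<pi> v a)\<^sup>2 / pref a * (g a)\<^sup>2)
                 - (\<Sum>a\<in>UNIV. (\<pi> v a)\<^sup>2 / pref a * g a)\<^sup>2
                   / (\<Sum>a\<in>UNIV. (\<pi> v a)\<^sup>2 / pref a)));
         w = (\<lambda>a. \<pi> u a / pref a);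
         Z = (\<Sum>a\<in>UNIV. (\<pi> u a)\<^sup>2 / pref a);
         \<mu> = (\<lambda>a. ((\<pi> u a)\<^sup>2 / pref a) / Z);
         Eg = (\<Sum>a'\<in>UNIV. \<mu> a' * g a')
     in (F has_real_derivative
           (- (eta\<^sup>2) * Z * (\<Sum>a\<in>UNIV. \<mu> a * (w a * (g a - Eg) ^ 3)))) (at u)"
proof -
  interpret kl_reward_path eta pref r rh
    using eta_pos pref_pos by unfold_locales simp_all
  define g where "g a = r a - rh a" for a
  define w where "w a = pol_u eta pref r rh u a / pref a" for a
  define Z where "Z = (\<Sum>a\<in>UNIV. sq_weight u a)"
  define E where "E = sq_weight_mean u g"
  have Z_pos: "0 < Z"
    unfolding Z_def by (intro sum_pos sq_weight_pos) simp_all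
  have "((\<lambda>v. (\<Sum>a\<in>UNIV. sq_weight v a * (g a)\<^sup>2)
           - (\<Sum>a\<in>UNIV. sq_weight v a * g a)\<^sup>2 / (\<Sum>a\<in>UNIV. sq_weight v a))
      has_real_derivative (\<Sum>a\<in>UNIV. - 2 * eta * sq_weight u a * w a * (g a - E) * (g a - E)\<^sup>2)) (at u)"
    unfolding E_def sq_weight_mean_def
    using sq_weight_has_derivative Z_pos
    by (intro DERIV_weighted_variance) (simp_all add: g_def w_def Z_def sq_weight_mean_def)
  then have "((\<lambda>v. eta / 2 * ((\<Sum>a\<in>UNIV. sq_weight v a * (g a)\<^sup>2)
           - (\<Sum>a\<in>UNIV. sq_weight v a * g a)\<^sup>2 / (\<Sum>a\<in>UNIV. sq_weight v a)))
      has_real_derivative eta / 2 * (\<Sum>a\<in>UNIV. - 2 * eta * sq_weight u a * w a * (g a - E) * (g a - E)\<^sup>2)) (at u)"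
    by (rule DERIV_cmult)
  also have "eta / 2 * (\<Sum>a\<in>UNIV. - 2 * eta * sq_weight u a * w a * (g a - E) * (g a - E)\<^sup>2)
      = - (eta\<^sup>2) * Z * (\<Sum>a\<in>UNIV. sq_weight u a / Z * (w a * (g a - E) ^ 3))"
    using Z_pos by (simp add: sum_distrib_left power2_eq_square power3_eq_cube algebra_simps)
  also have "E = (\<Sum>a\<in>UNIV. sq_weight u a / Z * g a)"
    by (simp add: E_def sq_weight_mean_def Z_def sum_divide_distrib)
  finally show ?thesis
    unfolding Let_def g_def[symmetric] w_def Z_def sq_weight_def .
qed

end
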